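(* Let $n\ge 1$, let $A=\{\mathit{pts}_1,\ldots,\mathit{pts}_n\}\subseteq\mathit{PTS}$, and let $\mathit{pts}=\nabla((\mathit{pts}_1,\tfrac1n),\ldots,(\mathit{pts}_n,\tfrac1n))$. Then $\mathit{PTS}$, ordered by the subtyping relation $\le$ (with equality taken to be $\equiv$), is a complete lattice, and $\mathit{pts}$ is the least upper bound $\bigvee A$ of $A$.
   Context: $\mathit{Var}$ is a finite set of program variables. $\mathit{Addrs}=\{x' \mid x\in\mathit{Var}\}$ is a set of symbolic addresses (one per variable) and $\mathit{Addrs}_p=\mathit{Addrs}\times[0,1]$. $\textit{Pre-PTS}$ is the set of maps $\mathit{pts}:\mathit{Var}\to 2^{\mathit{Addrs}_p}$ such that for all $x,y\in\mathit{Var}$, if $(y',p_1),(y',p_2)\in\mathit{pts}(x)$ then $p_1=p_2$. For $\mathit{pts}\in\textit{Pre-PTS}$ and $x\in\mathit{Var}$, $\sum_{\mathit{pts}} x=\sum_{(z',p)\in\mathit{pts}(x)} p$ and $A_{\mathit{pts}}(x)=\{z'\mid \exists p>0.\ (z',p)\in\mathit{pts}(x)\}$. The set of points-to types is $\mathit{PTS}=\{\mathit{pts}\in\textit{Pre-PTS}\mid \forall x\in\mathit{Var}.\ \sum_{\mathit{pts}} x\le 1\}$. Subtyping: $\mathit{pts}\le\mathit{pts}'$ iff $A_{\mathit{pts}}(x)\subseteq A_{\mathit{pts}'}(x)$ for all $x$; equality: $\mathit{pts}\equiv\mathit{pts}'$ iff $A_{\mathit{pts}}(x)=A_{\mathit{pts}'}(x)$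 for all $x$. For $\mathit{pts}_1,\ldots,\mathit{pts}_n\in\mathit{PTS}$ and weights $q_1,\ldots,q_n\in[0,1]$ with sum $\le 1$, $\nabla((\mathit{pts}_1,q_1),\ldots,(\mathit{pts}_n,q_n))(x)=\{(z',p)\mid (\exists i.\ z'\in A_{\mathit{pts}_i}(x))\wedge p=\sum_{k:\ (z',p_k)\in\mathit{pts}_k(x)} q_k\, p_k\}$. *)

theory Defs
  imports Complex_Main
begin

(* Program variables are modelled by a finite type 'v. The symbolic address x'
  of a variable x is represented by x itself (one address per variable), so
  Addrs_p = 'v \<times> [0,1] is represented by pairs of type 'v \<times> real with the
  probability component constrained to [0,1]. *)

type_synonym 'v pts = "'v \<Rightarrow> ('v \<times> real) set"

definition pre_pts :: "'v pts \<Rightarrow> bool" where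
  "pre_pts f \<longleftrightarrow>
     (\<forall>x z p. (z, p) \<in> f x \<longrightarrow> 0 \<le> p \<and> p \<le> 1) \<and>
     (\<forall>x z p1 p2. (z, p1) \<in> f x \<and> (z, p2) \<in> f x \<longrightarrow> p1 = p2)"

definition psum :: "'v pts \<Rightarrow> 'v \<Rightarrow> real" where
  "psum f x = (\<Sum>(z, p)\<in>f x. p)"

definition PTS :: "('v::finite) pts set" where
  "PTS = {f. pre_pts f \<and> (\<forall>x. psum f x \<le> 1)}"

definition supp :: "'v pts \<Rightarrow> 'v \<Rightarrow> 'v set" where
  "supp f x = {z. \<exists>p>0. (z, p) \<in> f x}"

definition subtype :: "'v pts \<Rightarrow> 'v pts \<Rightarrow> bool" (infix "\<le>\<^sub>p" 50) where
  "f \<le>\<^sub>p g \<longleftrightarrow> (\<forall>x. supp f x \<subseteq> supp g x)"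

definition pts_equiv :: "'v pts \<Rightarrow> 'v pts \<Rightarrow> bool" (infix "\<equiv>\<^sub>p" 50) where
  "f \<equiv>\<^sub>p g \<longleftrightarrow> (\<forall>x. supp f x = supp g x)"

(* nabla n P q = \<nabla>((P 0, q 0), ..., (P (n-1), q (n-1))). *)
definition nabla :: "nat \<Rightarrow> (nat \<Rightarrow> 'v pts) \<Rightarrow> (nat \<Rightarrow> real) \<Rightarrow> 'v pts" where
  "nabla n P q x = {(z, p). (\<exists>i<n. z \<in> supp (P i) x) \<and>
      p = (\<Sum>k\<in>{k. k < n \<and> (\<exists>pk. (z, pk) \<in> P k x)}. q k * (THE pk. (z, pk) \<in> P k x))}"

definition is_lub :: "('v::finite) pts set \<Rightarrow> 'v pts \<Rightarrow> bool" where
  "is_lub S u \<longleftrightarrow> u \<in> PTS \<and> (\<forall>s\<in>S. s \<le>\<^sub>p u) \<and>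
     (\<forall>v\<in>PTS. (\<forall>s\<in>S. s \<le>\<^sub>p v) \<longrightarrow> u \<le>\<^sub>p v)"

definition is_glb :: "('v::finite) pts set \<Rightarrow> 'v pts \<Rightarrow> bool" where
  "is_glb S l \<longleftrightarrow> l \<in> PTS \<and> (\<forall>s\<in>S. l \<le>\<^sub>p s) \<and>
     (\<forall>v\<in>PTS. (\<forall>s\<in>S. v \<le>\<^sub>p s) \<longrightarrow> v \<le>\<^sub>p l)"

(* (PTS, <=p) modulo ==p is a complete lattice: <=p is a preorder whose
  kernel is ==p, and every subset of PTS has a lub and a glb in PTS. *)
definition PTS_complete_lattice :: "('v::finite) itself \<Rightarrow> bool" where
  "PTS_complete_lattice (TYPE('v)) \<longleftrightarrow>
     (\<forall>f\<in>(PTS :: 'v pts set). f \<le>\<^sub>p f) \<and>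
     (\<forall>f\<in>(PTS :: 'v pts set). \<forall>g\<in>PTS. \<forall>h\<in>PTS. f \<le>\<^sub>p g \<and> g \<le>\<^sub>p h \<longrightarrow> f \<le>\<^sub>p h) \<and>
     (\<forall>f\<in>(PTS :: 'v pts set). \<forall>g\<in>PTS. (f \<le>\<^sub>p g \<and> g \<le>\<^sub>p f) \<longleftrightarrow> f \<equiv>\<^sub>p g) \<and>
     (\<forall>S\<subseteq>(PTS :: 'v pts set). (\<exists>u. is_lub S u) \<and> (\<exists>l. is_glb S l))"

end

theory Submission
  imports Defs
begin

text \<open>The subtyping order only looks at supports, and any pointwise family of support sets is
  the support of some points-to type (e.g. the uniform one with mass 1/|Var| per address).
  Hence joins and meets exist and are given pointwise by unions and intersections of supports.
  The averaged \<open>\<nabla>\<close> is a convex combination of sub-probability distributions, so it lies in PTS,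
  and since all weights are positive its support is exactly the union of the supports.\<close>

definition weight :: "'v pts \<Rightarrow> 'v \<Rightarrow> 'v \<Rightarrow> real" where
  "weight f x z = (if \<exists>p. (z, p) \<in> f x then THE p. (z, p) \<in> f x else 0)"

lemma weight_eq: "pre_pts f \<Longrightarrow> (z, p) \<in> f x \<Longrightarrow> weight f x z = p"
  unfolding weight_def pre_pts_def by (auto intro!: the_equality)

lemma weight_mem: "pre_pts f \<Longrightarrow> \<exists>p. (z, p) \<in> f x \<Longrightarrow> (z, weight f x z) \<in> f x"
  using weight_eq by fastforce

lemma weight_bounds:
  assumes "pre_pts f"
  shows "0 \<le> weight f x z" and "weight f x z \<le> 1"
proof -
  have "0 \<le> weight f x z \<and> weight f x z \<le> 1"
  proof (cases "\<exists>p. (z, p) \<in> f x")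
    case True
    then obtain p where "(z, p) \<in> f x" by blast
    with assms show ?thesis using weight_eq[OF assms] unfolding pre_pts_def by auto
  qed (simp add: weight_def)
  then show "0 \<le> weight f x z" and "weight f x z \<le> 1" by auto
qed

lemma pts_eq_image_weight: "pre_pts f \<Longrightarrow> f x = (\<lambda>z. (z, weight f x z)) ` (fst ` f x)"
  using weight_eq by (force simp: image_iff)

lemma psum_eq_sum_weight:
  fixes f :: "('v::finite) pts"
  assumes "pre_pts f"
  shows "psum f x = (\<Sum>z\<in>UNIV. weight f x z)"
proof -
  have "psum f x = (\<Sum>(z, p)\<in>(\<lambda>z. (z, weight f x z)) ` (fst ` f x). p)"
    unfolding psum_def using pts_eq_image_weight[OF assms] by metis
  also have "\<dots> = (\<Sum>z\<in>fst ` f x. weight f x z)"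
    by (subst sum.reindex) (auto simp: inj_on_def)
  also have "\<dots> = (\<Sum>z\<in>UNIV. weight f x z)"
    by (rule sum.mono_neutral_left) (auto simp: weight_def image_iff, metis fst_conv)
  finally show ?thesis .
qed

lemma supp_eq_weight_pos:
  assumes "pre_pts f"
  shows "supp f x = {z. 0 < weight f x z}"
proof -
  have "(\<exists>p>0. (z, p) \<in> f x) \<longleftrightarrow> 0 < weight f x z" for z
  proof
    show "\<exists>p>0. (z, p) \<in> f x \<Longrightarrow> 0 < weight f x z"
      using weight_eq[OF assms] by auto
    assume pos: "0 < weight f x z"
    then have "\<exists>p. (z, p) \<in> f x"
      unfolding weight_def by (auto split: if_splits)
    with pos show "\<exists>p>0. (z, p) \<in> f x"
      using weight_mem[OF assms] by blast
  qed
  then show ?thesis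
    unfolding supp_def by blast
qed

lemma is_lub_if_supp_Union:
  "u \<in> PTS \<Longrightarrow> (\<And>x. supp u x = (\<Union>s\<in>S. supp s x)) \<Longrightarrow> is_lub S u"
  unfolding is_lub_def subtype_def by blast

lemma is_glb_if_supp_Inter:
  "l \<in> PTS \<Longrightarrow> (\<And>x. supp l x = (\<Inter>s\<in>S. supp s x)) \<Longrightarrow> is_glb S l"
  unfolding is_glb_def subtype_def by blast

definition uniform_pts :: "('v \<Rightarrow> 'v set) \<Rightarrow> ('v::finite) pts" where
  "uniform_pts T x = (\<lambda>z. (z, 1 / real (card (UNIV :: 'v set)))) ` T x"

lemma uniform_pts_in_PTS: "uniform_pts (T :: 'v::finite \<Rightarrow> 'v set) \<in> PTS"
proof -
  have card: "1 \<le> real (card (UNIV :: 'v set))"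
    by (simp add: Suc_le_eq card_gt_0_iff)
  have "psum (uniform_pts T) x \<le> 1" for x
  proof -
    have "psum (uniform_pts T) x = real (card (T x)) / real (card (UNIV :: 'v set))"
      unfolding psum_def uniform_pts_def by (subst sum.reindex) (auto simp: inj_on_def)
    also have "\<dots> \<le> 1"
      using card card_mono[of UNIV "T x"] by (simp add: divide_le_eq)
    finally show ?thesis .
  qed
  moreover have "pre_pts (uniform_pts T)"
    unfolding pre_pts_def uniform_pts_def using card by auto
  ultimately show ?thesis
    unfolding PTS_def by auto
qed

lemma supp_uniform_pts: "supp (uniform_pts T) x = T (x::'v::finite)"
  unfolding supp_def uniform_pts_def by (auto simp: image_iff card_gt_0_iff)

theorem PTS_complete_lattice: "PTS_complete_lattice TYPE('v::finite)"
proof -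
  have "is_lub S (uniform_pts (\<lambda>x. \<Union>s\<in>S. supp s x))"
    and "is_glb S (uniform_pts (\<lambda>x. \<Inter>s\<in>S. supp s x))" for S :: "'v pts set"
    by (simp_all add: is_lub_if_supp_Union is_glb_if_supp_Inter
        uniform_pts_in_PTS supp_uniform_pts)
  then show ?thesis
    unfolding PTS_complete_lattice_def subtype_def pts_equiv_def by blast
qed

lemma nabla_eq_image:
  assumes "\<forall>i<n. pre_pts (P i)"
  shows "nabla n P q x =
    (\<lambda>z. (z, \<Sum>k<n. q k * weight (P k) x z)) ` (\<Union>i<n. supp (P i) x)"
proof -
  have "(\<Sum>k\<in>{k. k < n \<and> (\<exists>pk. (z, pk) \<in> P k x)}. q k * (THE pk. (z, pk) \<in> P k x))
      = (\<Sum>k<n. q k * weight (P k) x z)" for z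
    by (rule sum.mono_neutral_cong_left) (auto simp: weight_def)
  then show ?thesis
    unfolding nabla_def by (auto simp: image_iff)
qed

lemma nabla_in_PTS:
  fixes P :: "nat \<Rightarrow> ('v::finite) pts"
  assumes P: "\<forall>i<n. P i \<in> PTS"
    and q_nonneg: "\<And>k. k < n \<Longrightarrow> 0 \<le> q k" and q_sum: "(\<Sum>k<n. q k) \<le> 1"
  shows "nabla n P q \<in> PTS"
proof -
  have pre: "\<forall>i<n. pre_pts (P i)" and psum_P: "\<And>i x. i < n \<Longrightarrow> psum (P i) x \<le> 1"
    using P unfolding PTS_def by auto
  define g where "g x z = (\<Sum>k<n. q k * weight (P k) x z)" for x z
  have nabla: "nabla n P q x = (\<lambda>z. (z, g x z)) ` (\<Union>i<n. supp (P i) x)" for x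
    unfolding g_def by (rule nabla_eq_image[OF pre])
  have g_nonneg: "0 \<le> g x z" for x z
    unfolding g_def using pre q_nonneg by (intro sum_nonneg mult_nonneg_nonneg) (auto intro: weight_bounds)
  have g_le_1: "g x z \<le> 1" for x z
  proof -
    have "g x z \<le> (\<Sum>k<n. q k * 1)"
      unfolding g_def using pre q_nonneg by (intro sum_mono mult_left_mono) (auto intro: weight_bounds)
    then show ?thesis
      using q_sum by simp
  qed
  have "psum (nabla n P q) x \<le> 1" for x
  proof -
    have "psum (nabla n P q) x = (\<Sum>z\<in>(\<Union>i<n. supp (P i) x). g x z)"
      unfolding psum_def nabla by (subst sum.reindex) (auto simp: inj_on_def)
    also have "\<dots> \<le> (\<Sum>z\<in>UNIV. g x z)"
      by (rule sum_mono2) (auto simp: g_nonneg)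
    also have "\<dots> = (\<Sum>k<n. q k * (\<Sum>z\<in>UNIV. weight (P k) x z))"
      unfolding g_def by (simp add: sum.swap[of _ UNIV] sum_distrib_left)
    also have "\<dots> \<le> (\<Sum>k<n. q k * 1)"
      using psum_P pre q_nonneg
      by (intro sum_mono mult_left_mono) (auto simp: psum_eq_sum_weight[symmetric])
    finally show ?thesis
      using q_sum by simp
  qed
  moreover have "pre_pts (nabla n P q)"
    unfolding pre_pts_def nabla using g_nonneg g_le_1 by auto
  ultimately show ?thesis
    unfolding PTS_def by auto
qed

lemma supp_nabla:
  assumes pre: "\<forall>i<n. pre_pts (P i)" and q_pos: "\<And>k. k < n \<Longrightarrow> 0 < q k"
  shows "supp (nabla n P q) x = (\<Union>i<n. supp (P i) x)"
proof -
  have "0 < (\<Sum>k<n. q k * weight (P k) x z)" if "z \<in> supp (P i) x" "i < n" for z i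
  proof -
    have "0 < q i * weight (P i) x z"
      using that pre q_pos supp_eq_weight_pos[of "P i" x] by auto
    also have "\<dots> \<le> (\<Sum>k<n. q k * weight (P k) x z)"
      using that pre q_pos
      by (intro member_le_sum mult_nonneg_nonneg) (auto intro: weight_bounds less_imp_le)
    finally show ?thesis .
  qed
  then show ?thesis
    unfolding supp_def nabla_eq_image[OF pre] by auto
qed

lemma is_lub_nabla:
  assumes P: "\<forall>i<n. P i \<in> PTS"
    and q_pos: "\<And>k. k < n \<Longrightarrow> 0 < q k" and q_sum: "(\<Sum>k<n. q k) \<le> 1"
  shows "is_lub (P ` {..<n}) (nabla n P q)"
proof (rule is_lub_if_supp_Union)
  show "nabla n P q \<in> PTS"
    using P q_pos q_sum by (intro nabla_in_PTS) (auto intro: less_imp_le)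
  show "supp (nabla n P q) x = (\<Union>s\<in>P ` {..<n}. supp s x)" for x
    using P q_pos by (simp add: supp_nabla PTS_def)
qed

theorem lemma2:
  fixes P :: "nat \<Rightarrow> ('v::finite) pts" and n :: nat
  assumes "n \<ge> 1"
    and "\<forall>i<n. P i \<in> PTS"
  shows "PTS_complete_lattice TYPE('v) \<and>
         is_lub (P ` {..<n}) (nabla n P (\<lambda>_. 1 / real n))"
  using assms by (simp add: PTS_complete_lattice is_lub_nabla)

end
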